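(* Let $p$ be a prime and $G$ a $p$-group containing a normal abelian subgroup $A$ such that $C_G(A)$ has finite index in $G$. Assume that $A$ contains a $G$-invariant divisible Chernikov subgroup $D$. Then $A$ contains a $G$-invariant subgroup $S$ such that $A=SD$ and $S\cap D$ is finite. *)

theory Defs
  imports "HOL-Algebra.Algebra"
begin

definition p_group :: "nat \<Rightarrow> ('a, 'b) monoid_scheme \<Rightarrow> bool" where
  "p_group p G \<longleftrightarrow> group G \<and> (\<forall>x \<in> carrier G. \<exists>k::nat. x [^]\<^bsub>G\<^esub> (p ^ k) = \<one>\<^bsub>G\<^esub>)"

definition centralizer :: "('a, 'b) monoid_scheme \<Rightarrow> 'a set \<Rightarrow> 'a set" where
  "centralizer G A = {g \<in> carrier G. \<forall>a \<in> A. g \<otimes>\<^bsub>G\<^esub> a = a \<otimes>\<^bsub>G\<^esub> g}"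

definition commutative_subgroup :: "'a set \<Rightarrow> ('a, 'b) monoid_scheme \<Rightarrow> bool" where
  "commutative_subgroup A G \<longleftrightarrow> subgroup A G \<and> (\<forall>x \<in> A. \<forall>y \<in> A. x \<otimes>\<^bsub>G\<^esub> y = y \<otimes>\<^bsub>G\<^esub> x)"

definition divisible_subgroup :: "'a set \<Rightarrow> ('a, 'b) monoid_scheme \<Rightarrow> bool" where
  "divisible_subgroup D G \<longleftrightarrow> subgroup D G \<and>
     (\<forall>d \<in> D. \<forall>n::nat. n \<ge> 1 \<longrightarrow> (\<exists>e \<in> D. e [^]\<^bsub>G\<^esub> n = d))"

definition quasicyclic_subgroup :: "'a set \<Rightarrow> ('a, 'b) monoid_scheme \<Rightarrow> bool" where
  "quasicyclic_subgroup Q G \<longleftrightarrow> subgroup Q G \<and>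
     (\<exists>q::nat. \<exists>x :: nat \<Rightarrow> 'a. Factorial_Ring.prime q \<and> range x \<subseteq> carrier G \<and>
        x 0 = \<one>\<^bsub>G\<^esub> \<and> x 1 \<noteq> \<one>\<^bsub>G\<^esub> \<and>
        (\<forall>n. x (Suc n) [^]\<^bsub>G\<^esub> q = x n) \<and>
        Q = generate G (range x))"

definition internal_direct_product :: "'a set \<Rightarrow> 'a set list \<Rightarrow> ('a, 'b) monoid_scheme \<Rightarrow> bool" where
  "internal_direct_product N Qs G \<longleftrightarrow>
     (\<forall>Q \<in> set Qs. subgroup Q G) \<and>
     (\<forall>i j. i < length Qs \<longrightarrow> j < length Qs \<longrightarrow> i \<noteq> j \<longrightarrow>
        (\<forall>x \<in> Qs ! i. \<forall>y \<in> Qs ! j. x \<otimes>\<^bsub>G\<^esub> y = y \<otimes>\<^bsub>G\<^esub> x)) \<and>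
     bij_betw (\<lambda>xs. foldr (\<otimes>\<^bsub>G\<^esub>) xs \<one>\<^bsub>G\<^esub>)
        {xs. length xs = length Qs \<and> (\<forall>i < length xs. xs ! i \<in> Qs ! i)} N"

definition chernikov_subgroup :: "'a set \<Rightarrow> ('a, 'b) monoid_scheme \<Rightarrow> bool" where
  "chernikov_subgroup D G \<longleftrightarrow> subgroup D G \<and>
     (\<exists>N Qs. N \<lhd> (G\<lparr>carrier := D\<rparr>) \<and> finite (rcosets\<^bsub>G\<lparr>carrier := D\<rparr>\<^esub> N) \<and>
        (\<forall>Q \<in> set Qs. quasicyclic_subgroup Q G) \<and> internal_direct_product N Qs G)"

end

theory Submission
  imports Defs
begin

(* Since A is abelian and D divisible, D is a direct summand of A: Zorn's lemma applied to
   graphs of partial homomorphisms into D gives a retraction \<pi> : A \<rightarrow> D.  The conjugates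
   a \<mapsto> t \<pi>(t\<inverse> a t) t\<inverse> (t \<in> G) of \<pi> depend only on the coset of t modulo C_G(A),
   so there are finitely many, say n, and their pointwise product \<sigma> is a G-equivariant
   homomorphism A \<rightarrow> D with \<sigma>(d) = d^n on D.  Its kernel S is normal in G; A = SD because
   every \<sigma>(a) has an n-th root in D; and S \<inter> D lies in the n-torsion of D, which is finite
   because D is an abelian Chernikov group. *)

section \<open>Divisible subgroups of abelian groups are retracts\<close>

(* M is the graph of a homomorphism from a subgroup of G into D that is the identity on D. *)
definition retraction_graph :: "('a, 'b) monoid_scheme \<Rightarrow> 'a set \<Rightarrow> ('a \<times> 'a) set \<Rightarrow> bool" where
  "retraction_graph G D M \<longleftrightarrow> M \<subseteq> carrier G \<times> D \<and> (\<forall>d\<in>D. (d, d) \<in> M) \<and>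
     (\<forall>x y x' y'. (x, y) \<in> M \<longrightarrow> (x', y') \<in> M \<longrightarrow> (x \<otimes>\<^bsub>G\<^esub> x', y \<otimes>\<^bsub>G\<^esub> y') \<in> M) \<and>
     (\<forall>x y. (x, y) \<in> M \<longrightarrow> (inv\<^bsub>G\<^esub> x, inv\<^bsub>G\<^esub> y) \<in> M) \<and> single_valued M"

lemma retraction_graphD:
  assumes "retraction_graph G D M"
  shows retraction_graph_subset: "M \<subseteq> carrier G \<times> D"
    and retraction_graph_diag: "d \<in> D \<Longrightarrow> (d, d) \<in> M"
    and retraction_graph_mult: "(x, y) \<in> M \<Longrightarrow> (x', y') \<in> M \<Longrightarrow> (x \<otimes>\<^bsub>G\<^esub> x', y \<otimes>\<^bsub>G\<^esub> y') \<in> M"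
    and retraction_graph_inv: "(x, y) \<in> M \<Longrightarrow> (inv\<^bsub>G\<^esub> x, inv\<^bsub>G\<^esub> y) \<in> M"
    and retraction_graph_functional: "(x, y) \<in> M \<Longrightarrow> (x, z) \<in> M \<Longrightarrow> y = z"
  using assms unfolding retraction_graph_def single_valued_def by blast+

lemma retraction_graph_Union_chain:
  assumes "C \<noteq> {}" and chain: "subset.chain {M. retraction_graph G D M} C"
  shows "retraction_graph G D (\<Union>C)"
proof -
  have graphs: "\<And>M. M \<in> C \<Longrightarrow> retraction_graph G D M"
    using chain unfolding subset.chain_def by blast
  have common: "\<exists>N\<in>C. M \<union> M' \<subseteq> N" if "M \<in> C" "M' \<in> C" for M M'
  proof -
    have "M \<subseteq> M' \<or> M' \<subseteq> M" using chain that unfolding subset.chain_def by blast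
    then show ?thesis using that by blast
  qed
  show ?thesis
    unfolding retraction_graph_def single_valued_def
  proof (intro conjI allI impI ballI)
    show "\<Union>C \<subseteq> carrier G \<times> D" using graphs unfolding retraction_graph_def by blast
    show "(d, d) \<in> \<Union>C" if "d \<in> D" for d
      using that assms(1) graphs unfolding retraction_graph_def by blast
    show "(x \<otimes>\<^bsub>G\<^esub> x', y \<otimes>\<^bsub>G\<^esub> y') \<in> \<Union>C" if xy: "(x, y) \<in> \<Union>C" "(x', y') \<in> \<Union>C" for x y x' y'
    proof -
      obtain M M' where "M \<in> C" "(x, y) \<in> M" "M' \<in> C" "(x', y') \<in> M'" using xy by blast
      then obtain N where "N \<in> C" "(x, y) \<in> N" "(x', y') \<in> N" using common by blast
      then show ?thesis using graphs unfolding retraction_graph_def by blast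
    qed
    show "(inv\<^bsub>G\<^esub> x, inv\<^bsub>G\<^esub> y) \<in> \<Union>C" if "(x, y) \<in> \<Union>C" for x y
      using that graphs unfolding retraction_graph_def by blast
    show "y = z" if xy: "(x, y) \<in> \<Union>C" "(x, z) \<in> \<Union>C" for x y z
    proof -
      obtain M M' where "M \<in> C" "(x, y) \<in> M" "M' \<in> C" "(x, z) \<in> M'" using xy by blast
      then obtain N where "N \<in> C" "(x, y) \<in> N" "(x, z) \<in> N" using common by blast
      then show ?thesis using graphs unfolding retraction_graph_def single_valued_def by blast
    qed
  qed
qed

lemma (in group) retraction_graph_int_pow:
  assumes M: "retraction_graph G D M" and "subgroup D G" and xy: "(x, y) \<in> M"
  shows "(x [^] (k::int), y [^] k) \<in> M"
proof -
  have one: "(\<one>, \<one>) \<in> M"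
    using retraction_graph_diag[OF M] subgroup.one_closed[OF \<open>subgroup D G\<close>] .
  have nat_pow: "(x [^] (n::nat), y [^] n) \<in> M" for n
  proof (induction n)
    case (Suc n)
    then show ?case using retraction_graph_mult[OF M Suc xy] by simp
  qed (simp add: one)
  show ?thesis
  proof (cases "k < 0")
    case True
    then show ?thesis using retraction_graph_inv[OF M nat_pow] by (simp only: int_pow_def2 if_True)
  next
    case False
    then show ?thesis using nat_pow by (simp only: int_pow_def2 if_False)
  qed
qed

lemma (in group) retraction_graph_Domain_subgroup:
  assumes M: "retraction_graph G D M" and "subgroup D G"
  shows "subgroup (Domain M) G"
proof (rule subgroupI)
  show "Domain M \<subseteq> carrier G"
    using retraction_graph_subset[OF M] by auto
  show "Domain M \<noteq> {}"
    using retraction_graph_diag[OF M] subgroup.one_closed[OF \<open>subgroup D G\<close>] by blast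
  show "inv x \<in> Domain M" if "x \<in> Domain M" for x
    using retraction_graph_inv[OF M] that by blast
  show "x \<otimes> x' \<in> Domain M" if "x \<in> Domain M" "x' \<in> Domain M" for x x'
    using retraction_graph_mult[OF M] that by blast
qed

lemma (in group) int_pow_mem_subgroup_imp_nat_abs:
  assumes H: "subgroup H G" and a: "a \<in> carrier G" and k: "a [^] (k::int) \<in> H"
  shows "a [^] nat \<bar>k\<bar> \<in> H"
proof (cases "k < 0")
  case True
  then have "a [^] k = inv (a [^] nat \<bar>k\<bar>)"
    using int_pow_neg_int[OF a, of "nat \<bar>k\<bar>"] by simp
  then show ?thesis
    using k H a subgroup.m_inv_closed by fastforce
next
  case False
  then show ?thesis
    using k by (simp add: pow_nat)
qed

lemma (in group) int_pow_mem_subgroup_iff_dvd: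
  assumes H: "subgroup H G" and a: "a \<in> carrier G"
  obtains m :: nat where "\<And>k::int. a [^] k \<in> H \<longleftrightarrow> int m dvd k"
proof (cases "\<exists>n::nat. 0 < n \<and> a [^] n \<in> H")
  case False
  have "a [^] k \<in> H \<longleftrightarrow> k = 0" for k :: int
  proof
    assume "a [^] k \<in> H"
    with False show "k = 0"
      using int_pow_mem_subgroup_imp_nat_abs[OF H a] by (metis zero_less_abs_iff zero_less_nat_eq)
  qed (simp add: subgroup.one_closed[OF H])
  then show ?thesis
    using that[of 0] by simp
next
  case True
  define m where "m = (LEAST n::nat. 0 < n \<and> a [^] n \<in> H)"
  have m: "0 < m" "a [^] m \<in> H"
    using LeastI_ex[OF True] unfolding m_def by auto
  have least: "a [^] r \<notin> H" if "0 < r" "r < m" for r :: nat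
    using not_less_Least[of r] that unfolding m_def by blast
  have multiple: "a [^] (int m * q) \<in> H" for q
    using subgroup_int_pow_closed[OF H m(2), of q] a by (simp add: int_pow_int[symmetric] int_pow_pow)
  have "a [^] k \<in> H \<longleftrightarrow> int m dvd k" for k :: int
  proof
    assume k: "a [^] k \<in> H"
    define r where "r = k mod int m"
    have r: "0 \<le> r" "r < int m" using m(1) by (simp_all add: r_def)
    have "a [^] r = a [^] k \<otimes> inv (a [^] (int m * (k div int m)))"
      using a by (simp add: r_def minus_div_mult_eq_mod[symmetric] int_pow_diff mult.commute)
    then have "a [^] nat r \<in> H"
      using k multiple H subgroup.m_closed subgroup.m_inv_closed r(1) by (fastforce simp: pow_nat)
    then have "r = 0" using least[of "nat r"] r by linarith
    then show "int m dvd k" by (simp add: r_def dvd_eq_mod_eq_0)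
  next
    assume "int m dvd k"
    then show "a [^] k \<in> H" using multiple by (auto elim: dvdE)
  qed
  then show ?thesis using that by blast
qed

lemma (in group) retraction_graph_compatible_root:
  assumes M: "retraction_graph G D M" and D: "divisible_subgroup D G" and a: "a \<in> carrier G"
  obtains e where "e \<in> D" and "\<And>k y. (a [^] (k::int), y) \<in> M \<Longrightarrow> y = e [^] k"
proof -
  have DS: "subgroup D G"
    using D unfolding divisible_subgroup_def by blast
  \<comment> \<open>the exponents k with a^k in the domain of M form the ideal m\<int>; then e must be an
    m-th root of the image of a^m, and this is where divisibility of D is used\<close>
  obtain m :: nat where m: "\<And>k::int. a [^] k \<in> Domain M \<longleftrightarrow> int m dvd k"
    using int_pow_mem_subgroup_iff_dvd[OF retraction_graph_Domain_subgroup[OF M DS] a] by blast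
  obtain e where e: "e \<in> D" "(a [^] int m, e [^] int m) \<in> M"
  proof (cases "m = 0")
    case True
    then show ?thesis
      using that retraction_graph_diag[OF M] subgroup.one_closed[OF DS] by simp
  next
    case False
    obtain y where y: "(a [^] int m, y) \<in> M"
      using m[of "int m"] by auto
    then have "y \<in> D"
      using retraction_graph_subset[OF M] by auto
    moreover have "1 \<le> m"
      using False by simp
    ultimately obtain e where "e \<in> D" "e [^] m = y"
      using D unfolding divisible_subgroup_def by blast
    then show ?thesis
      using that y by (simp add: int_pow_int)
  qed
  show ?thesis
  proof (rule that[OF e(1)])
    fix k y
    assume ky: "(a [^] (k::int), y) \<in> M"
    then obtain q where k: "k = int m * q"
      using m[of k] by (auto elim: dvdE)
    have "(a [^] k, e [^] k) \<in> M"
      using retraction_graph_int_pow[OF M DS e(2), of q] a subgroup.mem_carrier[OF DS e(1)]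
      by (simp add: int_pow_pow k)
    then show "y = e [^] k"
      using retraction_graph_functional[OF M ky] by blast
  qed
qed

lemma (in comm_group) mult_inv_eq_mult_inv_iff:
  assumes "u \<in> carrier G" "v \<in> carrier G" "x \<in> carrier G" "y \<in> carrier G"
  shows "u \<otimes> inv v = x \<otimes> inv y \<longleftrightarrow> u \<otimes> y = x \<otimes> v"
proof -
  have "u \<otimes> inv v = x \<otimes> inv y \<longleftrightarrow> u = x \<otimes> inv y \<otimes> v"
    using assms by (simp add: inv_solve_right')
  also have "\<dots> \<longleftrightarrow> u \<otimes> y = x \<otimes> inv y \<otimes> v \<otimes> y"
    using assms by (metis inv_closed m_closed r_cancel)
  also have "x \<otimes> inv y \<otimes> v \<otimes> y = x \<otimes> v"
    using assms by (simp add: m_ac)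
  finally show ?thesis .
qed

(* The graph of the extension of M to the subgroup generated by Domain M and a, sending a to e. *)
definition adjoin_pair :: "('a, 'b) monoid_scheme \<Rightarrow> 'a \<Rightarrow> 'a \<Rightarrow> ('a \<times> 'a) set \<Rightarrow> ('a \<times> 'a) set" where
  "adjoin_pair G a e M = {(a [^]\<^bsub>G\<^esub> k \<otimes>\<^bsub>G\<^esub> x, e [^]\<^bsub>G\<^esub> k \<otimes>\<^bsub>G\<^esub> y) | (k::int) x y. (x, y) \<in> M}"

lemma (in group) adjoin_pair_extends:
  assumes M: "retraction_graph G D M" and DS: "subgroup D G" and a: "a \<in> carrier G" and e: "e \<in> D"
  shows "M \<subseteq> adjoin_pair G a e M" and "(a, e) \<in> adjoin_pair G a e M"
proof -
  show "M \<subseteq> adjoin_pair G a e M"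
  proof (rule subrelI)
    fix x y
    assume xy: "(x, y) \<in> M"
    then have "(a [^] (0::int) \<otimes> x, e [^] (0::int) \<otimes> y) \<in> adjoin_pair G a e M"
      unfolding adjoin_pair_def by blast
    moreover have "x \<in> carrier G" "y \<in> carrier G"
      using xy retraction_graph_subset[OF M] subgroup.mem_carrier[OF DS] by auto
    ultimately show "(x, y) \<in> adjoin_pair G a e M"
      by (simp only: int_pow_0 l_one)
  qed
  have "(a [^] (1::int) \<otimes> \<one>, e [^] (1::int) \<otimes> \<one>) \<in> adjoin_pair G a e M"
    using retraction_graph_diag[OF M subgroup.one_closed[OF DS]] unfolding adjoin_pair_def by blast
  then show "(a, e) \<in> adjoin_pair G a e M"
    using a subgroup.mem_carrier[OF DS e] by simp
qed

lemma (in comm_group) adjoin_pair_single_valued: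
  assumes M: "retraction_graph G D M" and DS: "subgroup D G" and a: "a \<in> carrier G"
    and e: "e \<in> D" and compatible: "\<And>k y. (a [^] (k::int), y) \<in> M \<Longrightarrow> y = e [^] k"
  shows "single_valued (adjoin_pair G a e M)"
proof (rule single_valuedI)
  fix x1 y1 y2
  assume "(x1, y1) \<in> adjoin_pair G a e M" "(x1, y2) \<in> adjoin_pair G a e M"
  then obtain k k' :: int and x y x' y' where
    1: "x1 = a [^] k \<otimes> x" "y1 = e [^] k \<otimes> y" "(x, y) \<in> M" and
    2: "x1 = a [^] k' \<otimes> x'" "y2 = e [^] k' \<otimes> y'" "(x', y') \<in> M"
    unfolding adjoin_pair_def by blast
  have Mc: "u \<in> carrier G" "v \<in> carrier G" if "(u, v) \<in> M" for u v
    using that retraction_graph_subset[OF M] subgroup.mem_carrier[OF DS] by auto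
  note carriers = Mc[OF 1(3)] Mc[OF 2(3)] int_pow_closed[OF a] int_pow_closed[OF subgroup.mem_carrier[OF DS e]]
  have "x' \<otimes> inv x = a [^] k \<otimes> inv (a [^] k')"
    using 1(1) 2(1) carriers by (simp add: mult_inv_eq_mult_inv_iff m_comm)
  then have "y' \<otimes> inv y = e [^] k \<otimes> inv (e [^] k')"
    using compatible retraction_graph_mult[OF M 2(3) retraction_graph_inv[OF M 1(3)]] a
      subgroup.mem_carrier[OF DS e] by (simp add: int_pow_diff[symmetric])
  then show "y1 = y2"
    using 1(2) 2(2) carriers by (simp add: mult_inv_eq_mult_inv_iff m_comm)
qed

lemma (in comm_group) adjoin_pair_closed:
  assumes M: "retraction_graph G D M" and DS: "subgroup D G" and a: "a \<in> carrier G" and e: "e \<in> D"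
    and p1: "(x1, y1) \<in> adjoin_pair G a e M"
  shows "(x2, y2) \<in> adjoin_pair G a e M \<Longrightarrow> (x1 \<otimes> x2, y1 \<otimes> y2) \<in> adjoin_pair G a e M"
    and "(inv x1, inv y1) \<in> adjoin_pair G a e M"
proof -
  have ec: "e \<in> carrier G"
    using subgroup.mem_carrier[OF DS e] .
  have Mc: "x \<in> carrier G" "y \<in> carrier G" if "(x, y) \<in> M" for x y
    using that retraction_graph_subset[OF M] subgroup.mem_carrier[OF DS] by auto
  have mem: "(a [^] k \<otimes> x, e [^] k \<otimes> y) \<in> adjoin_pair G a e M" if "(x, y) \<in> M" for k :: int and x y
    using that unfolding adjoin_pair_def by blast
  obtain k :: int and x y where 1: "x1 = a [^] k \<otimes> x" "y1 = e [^] k \<otimes> y" "(x, y) \<in> M"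
    using p1 unfolding adjoin_pair_def by blast
  show "(x1 \<otimes> x2, y1 \<otimes> y2) \<in> adjoin_pair G a e M" if p2: "(x2, y2) \<in> adjoin_pair G a e M"
  proof -
    obtain k' :: int and x' y' where 2: "x2 = a [^] k' \<otimes> x'" "y2 = e [^] k' \<otimes> y'" "(x', y') \<in> M"
      using p2 unfolding adjoin_pair_def by blast
    have "x1 \<otimes> x2 = a [^] (k + k') \<otimes> (x \<otimes> x')" "y1 \<otimes> y2 = e [^] (k + k') \<otimes> (y \<otimes> y')"
      using 1 2 Mc[OF 1(3)] Mc[OF 2(3)] a ec by (simp_all add: int_pow_mult m_ac)
    then show ?thesis
      using mem[OF retraction_graph_mult[OF M 1(3) 2(3)]] by simp
  qed
  have "inv x1 = a [^] (- k) \<otimes> inv x" "inv y1 = e [^] (- k) \<otimes> inv y"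
    using 1 Mc[OF 1(3)] a ec by (simp_all add: int_pow_neg inv_mult)
  then show "(inv x1, inv y1) \<in> adjoin_pair G a e M"
    using mem[OF retraction_graph_inv[OF M 1(3)]] by simp
qed

lemma (in comm_group) retraction_graph_adjoin_pair:
  assumes M: "retraction_graph G D M" and DS: "subgroup D G" and a: "a \<in> carrier G"
    and e: "e \<in> D" and compatible: "\<And>k y. (a [^] (k::int), y) \<in> M \<Longrightarrow> y = e [^] k"
  shows "retraction_graph G D (adjoin_pair G a e M)"
  unfolding retraction_graph_def
proof (intro conjI allI impI ballI adjoin_pair_single_valued[OF assms])
  have "a [^] k \<otimes> x \<in> carrier G \<and> e [^] k \<otimes> y \<in> D" if "(x, y) \<in> M" for k :: int and x y
    using that retraction_graph_subset[OF M] a subgroup.mem_carrier[OF DS]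
      subgroup.m_closed[OF DS subgroup_int_pow_closed[OF DS e]] by auto
  then show "adjoin_pair G a e M \<subseteq> carrier G \<times> D"
    unfolding adjoin_pair_def by blast
  show "(d, d) \<in> adjoin_pair G a e M" if "d \<in> D" for d
    using adjoin_pair_extends(1)[OF M DS a e] retraction_graph_diag[OF M that] by blast
qed (use adjoin_pair_closed[OF M DS a e] in blast)+

lemma retraction_graph_Id_on:
  assumes "subgroup D G"
  shows "retraction_graph G D (Id_on D)"
  using assms subgroup.mem_carrier subgroup.m_closed subgroup.m_inv_closed
  unfolding retraction_graph_def single_valued_def by fastforce

lemma (in comm_group) maximal_retraction_graph_total:
  assumes M: "retraction_graph G D M" and D: "divisible_subgroup D G"
    and maximal: "\<And>M'. retraction_graph G D M' \<Longrightarrow> M \<subseteq> M' \<Longrightarrow> M' = M"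
  shows "Domain M = carrier G"
proof
  show "Domain M \<subseteq> carrier G"
    using retraction_graph_subset[OF M] by auto
  show "carrier G \<subseteq> Domain M"
  proof
    fix a
    assume a: "a \<in> carrier G"
    have DS: "subgroup D G"
      using D unfolding divisible_subgroup_def by blast
    obtain e where e: "e \<in> D" and compatible: "\<And>k y. (a [^] (k::int), y) \<in> M \<Longrightarrow> y = e [^] k"
      using retraction_graph_compatible_root[OF M D a] by blast
    have "adjoin_pair G a e M = M"
      using maximal retraction_graph_adjoin_pair[OF M DS a e compatible]
        adjoin_pair_extends(1)[OF M DS a e] by blast
    then show "a \<in> Domain M"
      using adjoin_pair_extends(2)[OF M DS a e] by (metis Domain.DomainI)
  qed
qed

lemma (in comm_group) divisible_subgroup_retraction:
  assumes D: "divisible_subgroup D G"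
  obtains \<pi> where "\<pi> \<in> hom G (G\<lparr>carrier := D\<rparr>)" and "\<And>d. d \<in> D \<Longrightarrow> \<pi> d = d"
proof -
  have DS: "subgroup D G"
    using D unfolding divisible_subgroup_def by blast
  have "{M. retraction_graph G D M} \<noteq> {}"
    using retraction_graph_Id_on[OF DS] by blast
  then obtain M where M: "retraction_graph G D M"
    and maximal: "\<And>M'. retraction_graph G D M' \<Longrightarrow> M \<subseteq> M' \<Longrightarrow> M' = M"
    using subset_Zorn_nonempty[of "{M. retraction_graph G D M}"] retraction_graph_Union_chain
    by (metis mem_Collect_eq)
  define \<pi> where "\<pi> x = (THE y. (x, y) \<in> M)" for x
  have \<pi>_eq: "\<pi> x = y" if "(x, y) \<in> M" for x y
    unfolding \<pi>_def using that retraction_graph_functional[OF M] by blast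
  have graph: "(x, \<pi> x) \<in> M" if "x \<in> carrier G" for x
    using that maximal_retraction_graph_total[OF M D maximal] \<pi>_eq by blast
  show ?thesis
  proof (rule that)
    have "\<pi> x \<in> D" if "x \<in> carrier G" for x
      using graph[OF that] retraction_graph_subset[OF M] by blast
    moreover have "\<pi> (x \<otimes> y) = \<pi> x \<otimes> \<pi> y" if "x \<in> carrier G" "y \<in> carrier G" for x y
      using \<pi>_eq[OF retraction_graph_mult[OF M graph graph]] that by blast
    ultimately show "\<pi> \<in> hom G (G\<lparr>carrier := D\<rparr>)"
      by (simp add: hom_def)
    show "\<pi> d = d" if "d \<in> D" for d
      using \<pi>_eq retraction_graph_diag[OF M that] .
  qed
qed

section \<open>Finite torsion in abelian Chernikov groups\<close>

lemma prime_power_dvd_mult_cancel: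
  fixes q k m l :: nat
  assumes q: "Factorial_Ring.prime q" and m: "0 < m" and dvd: "q ^ l dvd k * m"
  shows "q ^ (l - m) dvd k"
proof (cases "k = 0")
  case False
  have not_unit: "\<not> is_unit q"
    using prime_ge_2_nat[OF q] by simp
  have "m < q ^ m"
    using prime_ge_2_nat[OF q] by (metis less_exp order_less_le_trans power_mono zero_le_numeral)
  then have "\<not> q ^ m dvd m"
    using m by (meson dvd_imp_le not_le)
  then have "multiplicity q m < m"
    using multiplicity_lessI m not_unit by blast
  moreover have "l \<le> multiplicity q (k * m)"
    using False m not_unit dvd by (intro multiplicity_geI) simp_all
  moreover have "multiplicity q (k * m) = multiplicity q k + multiplicity q m"
    using False m prime_elem_multiplicity_mult_distrib[OF prime_imp_prime_elem[OF q]] by simp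
  ultimately have "l - m \<le> multiplicity q k"
    by linarith
  then show ?thesis
    using multiplicity_dvd' False not_unit by blast
qed simp

locale quasicyclic_generators = group G for G (structure) +
  fixes q :: nat and x :: "nat \<Rightarrow> 'a"
  assumes prime: "Factorial_Ring.prime q" and x_closed [simp]: "x n \<in> carrier G"
    and x_0: "x 0 = \<one>" and x_1: "x 1 \<noteq> \<one>" and x_Suc_pow: "x (Suc n) [^] q = x n"
begin

lemma x_add_pow: "x (i + d) [^] (q ^ d) = x i"
proof (induction d)
  case (Suc d)
  have "x (i + Suc d) [^] (q ^ Suc d) = (x (Suc (i + d)) [^] q) [^] (q ^ d)"
    by (simp add: nat_pow_pow mult.commute)
  then show ?case
    using Suc.IH by (simp add: x_Suc_pow)
qed simp

lemma x_pow_shift: "i \<le> l \<Longrightarrow> x i [^] (a::nat) = x l [^] (q ^ (l - i) * a)"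
  using x_add_pow[of i "l - i"] by (simp add: nat_pow_pow[symmetric])

lemma x_pow_q_power_eq_one: "x l [^] (q ^ l) = \<one>"
  using x_add_pow[of 0 l] by (simp add: x_0)

lemma generate_mem_is_pow:
  assumes "y \<in> generate G (range x)"
  shows "\<exists>j k. y = x j [^] (k::nat)"
  using assms
proof (induction rule: generate.induct)
  case one
  show ?case
    by (metis nat_pow_0)
next
  case (incl h)
  then obtain j where "h = x j" by blast
  then have "h = x j [^] (1::nat)" by simp
  then show ?case by blast
next
  case (inv h)
  then obtain j where h: "h = x j" by blast
  have "x j [^] (q ^ j - 1) \<otimes> x j = x j [^] q ^ j"
    using prime_gt_0_nat[OF prime] by (metis One_nat_def Suc_pred nat_pow_Suc zero_less_power)
  then have "inv (x j) = x j [^] (q ^ j - 1)"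
    using inv_equality x_pow_q_power_eq_one by simp
  then show ?case using h by blast
next
  case (eng h1 h2)
  then obtain i a j b where h: "h1 = x i [^] (a::nat)" "h2 = x j [^] (b::nat)" by blast
  define l where "l = max i j"
  have "h1 \<otimes> h2 = x l [^] (q ^ (l - i) * a + q ^ (l - j) * b)"
    using h x_pow_shift[of i l] x_pow_shift[of j l] by (simp add: l_def nat_pow_mult)
  then show ?case by blast
qed

lemma x_pow_eq_one_imp_dvd:
  assumes "1 \<le> l" and "x l [^] (t::nat) = \<one>"
  shows "q ^ l dvd t"
proof -
  obtain s where s: "s \<le> l" "ord (x l) = q ^ s"
    using pow_eq_id[of "x l" "q ^ l"] x_pow_q_power_eq_one divides_primepow_nat[OF prime] by auto
  have "s = l"
  proof (rule ccontr)
    assume "s \<noteq> l"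
    then have "q ^ s dvd q ^ (l - 1)"
      using s(1) by (simp add: le_imp_power_dvd)
    then have "x l [^] (q ^ (l - 1)) = \<one>"
      using pow_eq_id[of "x l"] s(2) by simp
    then show False
      using x_add_pow[of 1 "l - 1"] assms(1) x_1 by simp
  qed
  then show ?thesis
    using pow_eq_id[of "x l"] assms(2) s(2) by simp
qed

lemma torsion_finite:
  assumes m: "1 \<le> (m::nat)"
  shows "finite {y \<in> generate G (range x). y [^] m = \<one>}"
proof -
  have "{y \<in> generate G (range x). y [^] m = \<one>} \<subseteq> (\<lambda>t. x m [^] t) ` {..<q ^ m}"
  proof
    fix y
    assume y: "y \<in> {y \<in> generate G (range x). y [^] m = \<one>}"
    obtain j k where "y = x j [^] (k::nat)"
      using generate_mem_is_pow y by blast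
    moreover define l where "l = max j m"
    ultimately have y_l: "y = x l [^] (q ^ (l - j) * k)"
      using x_pow_shift by simp
    then have "x l [^] (q ^ (l - j) * k * m) = \<one>"
      using y by (simp add: nat_pow_pow)
    then have "q ^ l dvd q ^ (l - j) * k * m"
      using x_pow_eq_one_imp_dvd m l_def by simp
    then have "q ^ (l - m) dvd q ^ (l - j) * k"
      using prime_power_dvd_mult_cancel[OF prime] m by simp
    then obtain t where "q ^ (l - j) * k = q ^ (l - m) * t"
      by (rule dvdE)
    then have "y = x m [^] t"
      using y_l x_pow_shift[of m l t] l_def by simp
    also have "\<dots> = (x m [^] (q ^ m)) [^] (t div q ^ m) \<otimes> x m [^] (t mod q ^ m)"
      by (simp add: nat_pow_pow nat_pow_mult)
    also have "\<dots> = x m [^] (t mod q ^ m)"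
      by (simp add: x_pow_q_power_eq_one)
    finally show "y \<in> (\<lambda>t. x m [^] t) ` {..<q ^ m}"
      using prime_gt_0_nat[OF prime] by simp
  qed
  then show ?thesis
    using finite_subset by blast
qed

end

lemma (in group) quasicyclic_subgroup_torsion_finite:
  assumes "quasicyclic_subgroup Q G" and "1 \<le> (m::nat)"
  shows "finite {y \<in> Q. y [^] m = \<one>}"
proof -
  obtain q :: nat and x where "Factorial_Ring.prime q" "range x \<subseteq> carrier G" "x 0 = \<one>" "x 1 \<noteq> \<one>"
    "\<And>n. x (Suc n) [^] q = x n" and Q: "Q = generate G (range x)"
    using assms(1) unfolding quasicyclic_subgroup_def by blast
  then have "quasicyclic_generators G q x"
    by unfold_locales auto
  then show ?thesis
    unfolding Q
    using quasicyclic_generators.torsion_finite assms(2) by blast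
qed

lemma (in group) foldr_mult_closed:
  "subgroup H G \<Longrightarrow> set xs \<subseteq> H \<Longrightarrow> foldr (\<otimes>) xs \<one> \<in> H"
  by (induction xs) (auto simp: subgroup.one_closed subgroup.m_closed)

lemma (in group) foldr_mult_commute:
  assumes "a \<in> carrier G" "set xs \<subseteq> carrier G" "\<forall>y\<in>set xs. a \<otimes> y = y \<otimes> a"
  shows "a \<otimes> foldr (\<otimes>) xs \<one> = foldr (\<otimes>) xs \<one> \<otimes> a"
  using assms
proof (induction xs)
  case (Cons y xs)
  have "a \<otimes> (y \<otimes> foldr (\<otimes>) xs \<one>) = y \<otimes> (a \<otimes> foldr (\<otimes>) xs \<one>)"
    using Cons.prems foldr_mult_closed[OF subgroup_self] by (simp add: m_assoc[symmetric])
  also have "\<dots> = (y \<otimes> foldr (\<otimes>) xs \<one>) \<otimes> a"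
    using Cons foldr_mult_closed[OF subgroup_self] by (simp add: m_assoc)
  finally show ?case by simp
qed simp

lemma (in group) foldr_mult_nat_pow:
  assumes "set xs \<subseteq> carrier G" and "\<forall>u\<in>set xs. \<forall>v\<in>set xs. u \<otimes> v = v \<otimes> u"
  shows "(foldr (\<otimes>) xs \<one>) [^] (n::nat) = foldr (\<otimes>) (map (\<lambda>z. z [^] n) xs) \<one>"
  using assms
proof (induction xs)
  case (Cons a xs)
  have carrier: "a \<in> carrier G" "set xs \<subseteq> carrier G"
    using Cons.prems(1) by simp_all
  have commute: "\<forall>u\<in>set xs. \<forall>v\<in>set xs. u \<otimes> v = v \<otimes> u" "\<forall>y\<in>set xs. a \<otimes> y = y \<otimes> a"
    by (intro ballI; rule Cons.prems(2)[rule_format]; simp)+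
  have "(a \<otimes> foldr (\<otimes>) xs \<one>) [^] n = a [^] n \<otimes> (foldr (\<otimes>) xs \<one>) [^] n"
    using pow_mult_distrib[OF foldr_mult_commute[OF carrier commute(2)]] carrier
      foldr_mult_closed[OF subgroup_self carrier(2)] by blast
  also have "\<dots> = a [^] n \<otimes> foldr (\<otimes>) (map (\<lambda>z. z [^] n) xs) \<one>"
    using Cons.IH[OF carrier(2) commute(1)] by (rule arg_cong)
  finally show ?case
    by simp
qed simp

lemma (in group) subgroup_nat_pow_closed:
  "subgroup H G \<Longrightarrow> h \<in> H \<Longrightarrow> h [^] (n::nat) \<in> H"
  using subgroup_int_pow_closed[of H h "int n"] by (simp add: int_pow_int)

definition factor_tuples :: "'a set list \<Rightarrow> 'a list set" where
  "factor_tuples Qs = {xs. length xs = length Qs \<and> (\<forall>i < length xs. xs ! i \<in> Qs ! i)}"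

lemma (in group) internal_direct_product_factor_tuples:
  assumes idp: "internal_direct_product N Qs G"
  shows "bij_betw (\<lambda>xs. foldr (\<otimes>) xs \<one>) (factor_tuples Qs) N"
    and "\<And>i. i < length Qs \<Longrightarrow> subgroup (Qs ! i) G"
    and "xs \<in> factor_tuples Qs \<Longrightarrow> set xs \<subseteq> carrier G"
    and "xs \<in> factor_tuples Qs \<Longrightarrow> \<forall>u\<in>set xs. \<forall>v\<in>set xs. u \<otimes> v = v \<otimes> u"
proof -
  show bij: "bij_betw (\<lambda>xs. foldr (\<otimes>) xs \<one>) (factor_tuples Qs) N"
    using idp unfolding internal_direct_product_def factor_tuples_def by blast
  show factor: "subgroup (Qs ! i) G" if "i < length Qs" for i
    using idp that unfolding internal_direct_product_def by simp
  assume xs: "xs \<in> factor_tuples Qs"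
  then have len: "length xs = length Qs" and entry: "\<And>i. i < length xs \<Longrightarrow> xs ! i \<in> Qs ! i"
    unfolding factor_tuples_def by auto
  show "set xs \<subseteq> carrier G"
    using entry factor subgroup.mem_carrier len by (fastforce simp: in_set_conv_nth)
  show "\<forall>u\<in>set xs. \<forall>v\<in>set xs. u \<otimes> v = v \<otimes> u"
  proof (intro ballI)
    fix u v
    assume "u \<in> set xs" "v \<in> set xs"
    then obtain i j where ij: "i < length xs" "u = xs ! i" "j < length xs" "v = xs ! j"
      by (auto simp: in_set_conv_nth)
    show "u \<otimes> v = v \<otimes> u"
    proof (cases "i = j")
      case False
      then show ?thesis
        using idp entry ij len unfolding internal_direct_product_def by simp
    qed (simp add: ij)
  qed
qed

lemma (in group) internal_direct_product_pow_eq_one: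
  assumes idp: "internal_direct_product N Qs G" and xs: "xs \<in> factor_tuples Qs"
    and pow: "(foldr (\<otimes>) xs \<one>) [^] (n::nat) = \<one>" and x: "x \<in> set xs"
  shows "x [^] n = \<one>"
proof -
  note tuples = internal_direct_product_factor_tuples[OF idp]
  have ones: "replicate (length Qs) \<one> \<in> factor_tuples Qs"
    unfolding factor_tuples_def using tuples(2) subgroup.one_closed by auto
  have "foldr (\<otimes>) (replicate k \<one>) \<one> = \<one>" for k
    by (induction k) auto
  then have "foldr (\<otimes>) (map (\<lambda>u. u [^] n) xs) \<one> = foldr (\<otimes>) (replicate (length Qs) \<one>) \<one>"
    using foldr_mult_nat_pow[OF tuples(3,4)[OF xs]] pow by simp
  moreover have "map (\<lambda>u. u [^] n) xs \<in> factor_tuples Qs"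
    using xs tuples(2) unfolding factor_tuples_def by (auto intro: subgroup_nat_pow_closed)
  ultimately have "map (\<lambda>u. u [^] n) xs = replicate (length Qs) \<one>"
    by (rule inj_onD[OF bij_betw_imp_inj_on[OF tuples(1)] _ _ ones])
  then show ?thesis
    using x by (metis in_set_replicate imageI list.set_map)
qed

lemma (in group) internal_direct_product_torsion_finite:
  assumes idp: "internal_direct_product N Qs G"
    and factor_torsion: "\<And>Q. Q \<in> set Qs \<Longrightarrow> finite {y \<in> Q. y [^] n = \<one>}"
  shows "finite {z \<in> N. z [^] (n::nat) = \<one>}"
proof -
  define B where "B = (\<Union>Q\<in>set Qs. {y \<in> Q. y [^] n = \<one>})"
  have "finite B"
    unfolding B_def using factor_torsion by blast
  have "{z \<in> N. z [^] n = \<one>} \<subseteq> (\<lambda>xs. foldr (\<otimes>) xs \<one>) ` {xs. set xs \<subseteq> B \<and> length xs = length Qs}"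
  proof
    fix z
    assume z: "z \<in> {z \<in> N. z [^] n = \<one>}"
    then obtain xs where xs: "xs \<in> factor_tuples Qs" "z = foldr (\<otimes>) xs \<one>"
      using bij_betw_imp_surj_on[OF internal_direct_product_factor_tuples(1)[OF idp]] by blast
    have "xs ! i \<in> B" if "i < length xs" for i
      using xs that internal_direct_product_pow_eq_one[OF idp xs(1)] z
      unfolding B_def factor_tuples_def by (fastforce simp: in_set_conv_nth)
    then have "set xs \<subseteq> B"
      by (auto simp: in_set_conv_nth)
    then show "z \<in> (\<lambda>xs. foldr (\<otimes>) xs \<one>) ` {xs. set xs \<subseteq> B \<and> length xs = length Qs}"
      using xs unfolding factor_tuples_def by blast
  qed
  then show ?thesis
    using finite_lists_length_eq[OF \<open>finite B\<close>] finite_subset by blast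
qed

lemma (in comm_group) torsion_finite_of_finite_index:
  assumes N: "subgroup N G" and index: "finite (rcosets N)"
    and N_torsion: "finite {y \<in> N. y [^] n = \<one>}"
  shows "finite {x \<in> carrier G. x [^] (n::nat) = \<one>}"
proof -
  let ?T = "{x \<in> carrier G. x [^] n = \<one>}"
  have "finite (Y \<inter> ?T)" if Y: "Y \<in> rcosets N" for Y
  proof (cases "Y \<inter> ?T = {}")
    case False
    then obtain y0 where y0: "y0 \<in> Y" "y0 \<in> ?T" by blast
    obtain h where h: "h \<in> carrier G" "Y = N #> h"
      using Y unfolding RCOSETS_def by blast
    have Y_y0: "Y = N #> y0"
      using repr_independence[OF _ h(1) N] y0(1) h(2) by blast
    have "Y \<inter> ?T \<subseteq> (\<lambda>z. z \<otimes> y0) ` {y \<in> N. y [^] n = \<one>}"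
    proof
      fix y
      assume y: "y \<in> Y \<inter> ?T"
      have y0c: "y0 \<in> carrier G" and yc: "y \<in> carrier G"
        using y0 y by auto
      have "y \<otimes> inv y0 \<in> N"
        using subgroup.rcos_module_imp[OF N is_group y0c] y Y_y0 by blast
      moreover have "(y \<otimes> inv y0) [^] n = \<one>"
        using y y0 yc y0c by (simp add: pow_mult_distrib m_comm nat_pow_inv)
      moreover have "y = (y \<otimes> inv y0) \<otimes> y0"
        using yc y0c by (simp add: m_assoc)
      ultimately show "y \<in> (\<lambda>z. z \<otimes> y0) ` {y \<in> N. y [^] n = \<one>}"
        using image_eqI[of y "\<lambda>z. z \<otimes> y0" "y \<otimes> inv y0"] by blast
    qed
    then show ?thesis
      using N_torsion finite_subset by blast
  qed simp
  then have "finite (\<Union>Y\<in>rcosets N. Y \<inter> ?T)"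
    using index by blast
  moreover have "?T \<subseteq> (\<Union>Y\<in>rcosets N. Y \<inter> ?T)"
    using rcosets_part_G[OF N] by blast
  ultimately show ?thesis
    by (rule finite_subset[rotated])
qed

lemma (in group) commutative_subgroup_imp_comm_group:
  "commutative_subgroup H G \<Longrightarrow> comm_group (G\<lparr>carrier := H\<rparr>)"
  unfolding commutative_subgroup_def
  using group.group_comm_groupI[OF subgroup_imp_group] by force

lemma (in group) chernikov_subgroup_torsion_finite:
  assumes chernikov: "chernikov_subgroup D G" and D: "commutative_subgroup D G" and n: "1 \<le> n"
  shows "finite {d \<in> D. d [^] (n::nat) = \<one>}"
proof -
  obtain N Qs where N: "N \<lhd> G\<lparr>carrier := D\<rparr>" and index: "finite (rcosets\<^bsub>G\<lparr>carrier := D\<rparr>\<^esub> N)"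
    and quasicyclic: "\<forall>Q\<in>set Qs. quasicyclic_subgroup Q G" and idp: "internal_direct_product N Qs G"
    using chernikov unfolding chernikov_subgroup_def by blast
  interpret DD: comm_group "G\<lparr>carrier := D\<rparr>"
    using commutative_subgroup_imp_comm_group[OF D] .
  have N_subgroup: "subgroup N (G\<lparr>carrier := D\<rparr>)"
    using N normal_imp_subgroup by blast
  have "finite {y \<in> N. y [^] n = \<one>}"
    using internal_direct_product_torsion_finite[OF idp] quasicyclic_subgroup_torsion_finite quasicyclic n
    by blast
  then have "finite {y \<in> N. y [^]\<^bsub>G\<lparr>carrier := D\<rparr>\<^esub> n = \<one>\<^bsub>G\<lparr>carrier := D\<rparr>\<^esub>}"
    by (simp add: nat_pow_consistent[symmetric])
  then have "finite {d \<in> carrier (G\<lparr>carrier := D\<rparr>). d [^]\<^bsub>G\<lparr>carrier := D\<rparr>\<^esub> n = \<one>\<^bsub>G\<lparr>carrier := D\<rparr>\<^esub>}"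
    by (rule DD.torsion_finite_of_finite_index[OF N_subgroup index])
  then show ?thesis
    by (simp add: nat_pow_consistent[symmetric])
qed

section \<open>Averaging a retraction over its conjugates\<close>

lemma hom_finprod:
  assumes G: "comm_group G" and H: "comm_group H" and h: "h \<in> hom G H"
    and f: "f \<in> I \<rightarrow> carrier G" and I: "finite I"
  shows "h (finprod G f I) = finprod H (\<lambda>i. h (f i)) I"
proof -
  interpret G: comm_group G by (rule G)
  interpret H: comm_group H by (rule H)
  interpret group_hom G H h
    by (simp add: group_hom_def group_hom_axioms_def h G.is_group H.is_group)
  show ?thesis
    using I f
  proof (induction I rule: finite_induct)
    case (insert i I)
    then have "h (finprod G f (insert i I)) = h (f i) \<otimes>\<^bsub>H\<^esub> h (finprod G f I)"
      by (simp add: Pi_def)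
    also have "\<dots> = finprod H (\<lambda>i. h (f i)) (insert i I)"
      using insert by (simp add: Pi_def)
    finally show ?case .
  qed simp
qed

lemma (in group) m_inv_cancel_left: "x \<in> carrier G \<Longrightarrow> y \<in> carrier G \<Longrightarrow> x \<otimes> (inv x \<otimes> y) = y"
  by (simp add: m_assoc[symmetric])

lemma (in group) inv_m_cancel_left: "x \<in> carrier G \<Longrightarrow> y \<in> carrier G \<Longrightarrow> inv x \<otimes> (x \<otimes> y) = y"
  by (simp add: m_assoc[symmetric])

lemma (in group) conj_mult_distrib:
  assumes "t \<in> carrier G" "u \<in> carrier G" "v \<in> carrier G"
  shows "t \<otimes> (u \<otimes> v) \<otimes> inv t = (t \<otimes> u \<otimes> inv t) \<otimes> (t \<otimes> v \<otimes> inv t)"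
  using assms by (simp add: m_assoc inv_m_cancel_left)

locale conjugation_averaging = group G for G (structure) +
  fixes A D :: "'a set" and \<pi> :: "'a \<Rightarrow> 'a"
  assumes A_normal: "A \<lhd> G" and D_normal: "D \<lhd> G" and D_subset_A: "D \<subseteq> A"
    and D_commutative: "commutative_subgroup D G"
    and centralizer_finite_index: "finite (rcosets (centralizer G A))"
    and retraction_hom: "\<pi> \<in> hom (G\<lparr>carrier := A\<rparr>) (G\<lparr>carrier := D\<rparr>)"
    and retraction_fixes: "\<And>d. d \<in> D \<Longrightarrow> \<pi> d = d"
begin

lemma A_carrier: "a \<in> A \<Longrightarrow> a \<in> carrier G"
  by (rule subgroup.mem_carrier[OF normal_imp_subgroup[OF A_normal]])

lemma D_carrier: "d \<in> D \<Longrightarrow> d \<in> carrier G"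
  by (rule subgroup.mem_carrier[OF normal_imp_subgroup[OF D_normal]])

lemma retraction_closed: "a \<in> A \<Longrightarrow> \<pi> a \<in> D"
  using hom_in_carrier[OF retraction_hom] by simp

lemma retraction_mult: "a \<in> A \<Longrightarrow> b \<in> A \<Longrightarrow> \<pi> (a \<otimes> b) = \<pi> a \<otimes> \<pi> b"
  using retraction_hom unfolding hom_def by simp

definition conjugate_retraction :: "'a \<Rightarrow> 'a \<Rightarrow> 'a" where
  "conjugate_retraction t = (\<lambda>a\<in>A. t \<otimes> \<pi> (inv t \<otimes> a \<otimes> t) \<otimes> inv t)"

definition conjugate_retractions :: "('a \<Rightarrow> 'a) set" where
  "conjugate_retractions = conjugate_retraction ` carrier G"

lemma A_conj_closed: "t \<in> carrier G \<Longrightarrow> a \<in> A \<Longrightarrow> inv t \<otimes> a \<otimes> t \<in> A"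
  by (rule normal.inv_op_closed1[OF A_normal])

lemma conjugate_retraction_apply:
  "a \<in> A \<Longrightarrow> conjugate_retraction t a = t \<otimes> \<pi> (inv t \<otimes> a \<otimes> t) \<otimes> inv t"
  unfolding conjugate_retraction_def by simp

lemma conjugate_retraction_closed:
  assumes "t \<in> carrier G" "a \<in> A"
  shows "conjugate_retraction t a \<in> D"
  unfolding conjugate_retraction_apply[OF assms(2)]
  by (rule normal.inv_op_closed2[OF D_normal assms(1) retraction_closed[OF A_conj_closed[OF assms]]])

lemma conjugate_retraction_mult:
  assumes t: "t \<in> carrier G" and a: "a \<in> A" and b: "b \<in> A"
  shows "conjugate_retraction t (a \<otimes> b) = conjugate_retraction t a \<otimes> conjugate_retraction t b"
proof -
  have ab: "a \<otimes> b \<in> A"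
    using subgroup.m_closed[OF normal_imp_subgroup[OF A_normal] a b] .
  have "inv t \<otimes> (a \<otimes> b) \<otimes> t = (inv t \<otimes> a \<otimes> t) \<otimes> (inv t \<otimes> b \<otimes> t)"
    using conj_mult_distrib[of "inv t" a b] t A_carrier[OF a] A_carrier[OF b] by simp
  then have "\<pi> (inv t \<otimes> (a \<otimes> b) \<otimes> t) = \<pi> (inv t \<otimes> a \<otimes> t) \<otimes> \<pi> (inv t \<otimes> b \<otimes> t)"
    using retraction_mult[OF A_conj_closed[OF t a] A_conj_closed[OF t b]] by simp
  then show ?thesis
    unfolding conjugate_retraction_apply[OF ab] conjugate_retraction_apply[OF a] conjugate_retraction_apply[OF b]
    using conj_mult_distrib t D_carrier retraction_closed A_conj_closed a b by simp
qed

lemma conjugate_retraction_fixes: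
  assumes t: "t \<in> carrier G" and d: "d \<in> D"
  shows "conjugate_retraction t d = d"
proof -
  have "\<pi> (inv t \<otimes> d \<otimes> t) = inv t \<otimes> d \<otimes> t"
    by (rule retraction_fixes[OF normal.inv_op_closed1[OF D_normal t d]])
  then show ?thesis
    unfolding conjugate_retraction_apply[OF subsetD[OF D_subset_A d]]
    using t D_carrier[OF d] by (simp add: m_assoc m_inv_cancel_left)
qed

lemma conjugate_retraction_mult_left:
  assumes g: "g \<in> carrier G" and t: "t \<in> carrier G" and a: "a \<in> A"
  shows "conjugate_retraction (g \<otimes> t) a = g \<otimes> conjugate_retraction t (inv g \<otimes> a \<otimes> g) \<otimes> inv g"
proof -
  have "inv t \<otimes> (inv g \<otimes> a \<otimes> g) \<otimes> t = inv (g \<otimes> t) \<otimes> a \<otimes> (g \<otimes> t)"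
    using g t A_carrier[OF a] by (simp add: m_assoc inv_mult_group)
  moreover have "\<pi> (inv (g \<otimes> t) \<otimes> a \<otimes> (g \<otimes> t)) \<in> carrier G"
    using D_carrier[OF retraction_closed[OF A_conj_closed[OF _ a]]] g t by simp
  ultimately show ?thesis
    using g t a A_conj_closed[OF g a]
    by (simp add: conjugate_retraction_apply m_assoc inv_mult_group)
qed

lemma conjugate_retraction_mult_inv_centralizer:
  assumes t: "t \<in> carrier G" and c: "c \<in> centralizer G A"
  shows "conjugate_retraction (t \<otimes> inv c) = conjugate_retraction t"
proof
  fix a
  have cc: "c \<in> carrier G" and commutes: "\<And>b. b \<in> A \<Longrightarrow> c \<otimes> b = b \<otimes> c"
    using c unfolding centralizer_def by auto
  have cancel: "c \<otimes> b \<otimes> inv c = b" "inv c \<otimes> b \<otimes> c = b" if "b \<in> A" for b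
    using cc A_carrier[OF that] by (simp add: m_assoc commutes[OF that],
        simp add: m_assoc inv_m_cancel_left commutes[OF that, symmetric])
  show "conjugate_retraction (t \<otimes> inv c) a = conjugate_retraction t a"
  proof (cases "a \<in> A")
    case True
    define b where "b = inv t \<otimes> a \<otimes> t"
    have b: "b \<in> A" "\<pi> b \<in> A" "b \<in> carrier G" "\<pi> b \<in> carrier G"
      unfolding b_def using A_conj_closed[OF t True] retraction_closed D_subset_A A_carrier by auto
    have "inv (t \<otimes> inv c) \<otimes> a \<otimes> (t \<otimes> inv c) = c \<otimes> b \<otimes> inv c"
      unfolding b_def using t cc A_carrier[OF True] by (simp add: m_assoc inv_mult_group)
    then have "conjugate_retraction (t \<otimes> inv c) a = t \<otimes> (inv c \<otimes> \<pi> b \<otimes> c) \<otimes> inv t"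
      using True t cc b cancel(1)[OF b(1)]
      unfolding conjugate_retraction_def by (simp add: m_assoc inv_mult_group)
    then show ?thesis
      using True cancel(2)[OF b(2)] unfolding conjugate_retraction_def b_def by simp
  qed (simp add: conjugate_retraction_def)
qed

lemma finite_conjugate_retractions: "finite conjugate_retractions"
proof -
  let ?C = "centralizer G A"
  \<comment> \<open>conjugate_retraction t only depends on the left coset t C, i.e. on the right coset C #> inv t\<close>
  define rep where "rep Y = conjugate_retraction (inv (SOME s. s \<in> Y))" for Y
  have "conjugate_retractions \<subseteq> rep ` (rcosets ?C)"
  proof
    fix f
    assume "f \<in> conjugate_retractions"
    then obtain t where t: "t \<in> carrier G" and f: "f = conjugate_retraction t"
      unfolding conjugate_retractions_def by blast
    have "\<one> \<in> ?C"
      unfolding centralizer_def using A_carrier by simp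
    then have "inv t \<in> ?C #> inv t"
      unfolding r_coset_def using t by force
    then have "(SOME s. s \<in> ?C #> inv t) \<in> ?C #> inv t"
      by (rule someI)
    then obtain c where c: "c \<in> ?C" and some: "(SOME s. s \<in> ?C #> inv t) = c \<otimes> inv t"
      unfolding r_coset_def by blast
    have "c \<in> carrier G"
      using c unfolding centralizer_def by simp
    then have "rep (?C #> inv t) = conjugate_retraction (t \<otimes> inv c)"
      unfolding rep_def some using t by (simp add: inv_mult_group)
    also have "\<dots> = f"
      unfolding f using conjugate_retraction_mult_inv_centralizer[OF t c] .
    finally show "f \<in> rep ` (rcosets ?C)"
      using t unfolding RCOSETS_def by blast
  qed
  then show ?thesis
    using finite_surj[OF centralizer_finite_index] by blast
qed

lemma conjugate_retractions_nonempty: "conjugate_retractions \<noteq> {}"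
  unfolding conjugate_retractions_def by blast

definition conjugate_action :: "'a \<Rightarrow> ('a \<Rightarrow> 'a) \<Rightarrow> 'a \<Rightarrow> 'a" where
  "conjugate_action g f = (\<lambda>a\<in>A. g \<otimes> f (inv g \<otimes> a \<otimes> g) \<otimes> inv g)"

lemma conjugate_action_conjugate_retraction:
  assumes g: "g \<in> carrier G" and t: "t \<in> carrier G"
  shows "conjugate_action g (conjugate_retraction t) = conjugate_retraction (g \<otimes> t)"
proof
  fix a
  show "conjugate_action g (conjugate_retraction t) a = conjugate_retraction (g \<otimes> t) a"
    using conjugate_retraction_mult_left[OF g t] A_conj_closed[OF g]
    unfolding conjugate_action_def by (simp add: conjugate_retraction_def)
qed

lemma conjugate_action_bij:
  assumes g: "g \<in> carrier G"
  shows "bij_betw (conjugate_action g) conjugate_retractions conjugate_retractions"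
proof -
  have "conjugate_action g ` conjugate_retractions = conjugate_retractions"
  proof
    show "conjugate_action g ` conjugate_retractions \<subseteq> conjugate_retractions"
      unfolding conjugate_retractions_def using conjugate_action_conjugate_retraction g by auto
    show "conjugate_retractions \<subseteq> conjugate_action g ` conjugate_retractions"
    proof
      fix f
      assume "f \<in> conjugate_retractions"
      then obtain t where t: "t \<in> carrier G" and f: "f = conjugate_retraction t"
        unfolding conjugate_retractions_def by blast
      have "f = conjugate_action g (conjugate_retraction (inv g \<otimes> t))"
        unfolding f using conjugate_action_conjugate_retraction[OF g, of "inv g \<otimes> t"] g t
        by (simp add: m_inv_cancel_left)
      then show "f \<in> conjugate_action g ` conjugate_retractions"
        unfolding conjugate_retractions_def using g t by blast
    qed
  qed
  then show ?thesis
    using finite_surj_inj[OF finite_conjugate_retractions] unfolding bij_betw_def by simp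
qed

lemma conjugate_retractions_closed: "f \<in> conjugate_retractions \<Longrightarrow> a \<in> A \<Longrightarrow> f a \<in> D"
  unfolding conjugate_retractions_def using conjugate_retraction_closed by blast

lemma conjugation_hom_D: "g \<in> carrier G \<Longrightarrow> (\<lambda>d. g \<otimes> d \<otimes> inv g) \<in> hom (G\<lparr>carrier := D\<rparr>) (G\<lparr>carrier := D\<rparr>)"
  using normal.inv_op_closed2[OF D_normal] conj_mult_distrib D_carrier by (simp add: hom_def)

definition averaged_retraction :: "'a \<Rightarrow> 'a" where
  "averaged_retraction a = finprod (G\<lparr>carrier := D\<rparr>) (\<lambda>f. f a) conjugate_retractions"

lemma averaged_retraction_hom: "averaged_retraction \<in> hom (G\<lparr>carrier := A\<rparr>) (G\<lparr>carrier := D\<rparr>)"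
proof -
  interpret DD: comm_group "G\<lparr>carrier := D\<rparr>"
    by (rule commutative_subgroup_imp_comm_group[OF D_commutative])
  have closed: "(\<lambda>f. f a) \<in> conjugate_retractions \<rightarrow> carrier (G\<lparr>carrier := D\<rparr>)" if "a \<in> A" for a
    using conjugate_retractions_closed that by auto
  have "averaged_retraction (a \<otimes> b) = averaged_retraction a \<otimes> averaged_retraction b"
    if a: "a \<in> A" and b: "b \<in> A" for a b
  proof -
    have "averaged_retraction (a \<otimes> b) =
        finprod (G\<lparr>carrier := D\<rparr>) (\<lambda>f. f a \<otimes>\<^bsub>G\<lparr>carrier := D\<rparr>\<^esub> f b) conjugate_retractions"
      unfolding averaged_retraction_def
    proof (rule DD.finprod_cong')
      show "(\<lambda>f. f a \<otimes>\<^bsub>G\<lparr>carrier := D\<rparr>\<^esub> f b) \<in> conjugate_retractions \<rightarrow> carrier (G\<lparr>carrier := D\<rparr>)"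
        using closed[OF a] closed[OF b] subgroup.m_closed[OF normal_imp_subgroup[OF D_normal]] by auto
      show "f (a \<otimes> b) = f a \<otimes>\<^bsub>G\<lparr>carrier := D\<rparr>\<^esub> f b" if "f \<in> conjugate_retractions" for f
        using that conjugate_retraction_mult a b unfolding conjugate_retractions_def by auto
    qed simp
    then show ?thesis
      unfolding averaged_retraction_def using DD.finprod_multf[OF closed[OF a] closed[OF b]] by simp
  qed
  moreover have "averaged_retraction a \<in> D" if "a \<in> A" for a
    unfolding averaged_retraction_def using DD.finprod_closed closed[OF that] by simp
  ultimately show ?thesis
    by (simp add: hom_def)
qed

lemma averaged_retraction_on_D:
  assumes d: "d \<in> D"
  shows "averaged_retraction d = d [^] card conjugate_retractions"
proof -
  interpret DD: comm_group "G\<lparr>carrier := D\<rparr>"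
    by (rule commutative_subgroup_imp_comm_group[OF D_commutative])
  have "averaged_retraction d = finprod (G\<lparr>carrier := D\<rparr>) (\<lambda>f. d) conjugate_retractions"
    unfolding averaged_retraction_def
  proof (rule DD.finprod_cong')
    show "f d = d" if "f \<in> conjugate_retractions" for f
      using that conjugate_retraction_fixes d unfolding conjugate_retractions_def by auto
  qed (use d in auto)
  then show ?thesis
    using DD.finprod_const[of d conjugate_retractions] nat_pow_consistent[of d _ D] d by simp
qed

lemma averaged_retraction_conj:
  assumes g: "g \<in> carrier G" and a: "a \<in> A"
  shows "averaged_retraction (g \<otimes> a \<otimes> inv g) = g \<otimes> averaged_retraction a \<otimes> inv g"
proof -
  interpret DD: comm_group "G\<lparr>carrier := D\<rparr>"
    by (rule commutative_subgroup_imp_comm_group[OF D_commutative])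
  let ?\<Phi> = conjugate_retractions
  have gag: "g \<otimes> a \<otimes> inv g \<in> A"
    using A_conj_closed[of "inv g" a] g a by simp
  have bij: "bij_betw (conjugate_action g) ?\<Phi> ?\<Phi>"
    by (rule conjugate_action_bij[OF g])
  have "averaged_retraction (g \<otimes> a \<otimes> inv g) =
      finprod (G\<lparr>carrier := D\<rparr>) (\<lambda>f. f (g \<otimes> a \<otimes> inv g)) (conjugate_action g ` ?\<Phi>)"
    unfolding averaged_retraction_def using bij_betw_imp_surj_on[OF bij] by simp
  also have "\<dots> = finprod (G\<lparr>carrier := D\<rparr>) (\<lambda>f. conjugate_action g f (g \<otimes> a \<otimes> inv g)) ?\<Phi>"
    using bij_betw_imp_surj_on[OF bij] bij_betw_imp_inj_on[OF bij] conjugate_retractions_closed gag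
    by (intro DD.finprod_reindex) auto
  also have "\<dots> = finprod (G\<lparr>carrier := D\<rparr>) (\<lambda>f. g \<otimes> f a \<otimes> inv g) ?\<Phi>"
  proof (rule DD.finprod_cong')
    show "(\<lambda>f. g \<otimes> f a \<otimes> inv g) \<in> ?\<Phi> \<rightarrow> carrier (G\<lparr>carrier := D\<rparr>)"
      using normal.inv_op_closed2[OF D_normal g] conjugate_retractions_closed a by simp
    have "inv g \<otimes> (g \<otimes> a \<otimes> inv g) \<otimes> g = a"
      using g A_carrier[OF a] by (simp add: m_assoc inv_m_cancel_left)
    then show "conjugate_action g f (g \<otimes> a \<otimes> inv g) = g \<otimes> f a \<otimes> inv g" for f
      unfolding conjugate_action_def using gag by simp
  qed simp
  also have "\<dots> = g \<otimes> averaged_retraction a \<otimes> inv g"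
  proof -
    have "(\<lambda>f. f a) \<in> ?\<Phi> \<rightarrow> carrier (G\<lparr>carrier := D\<rparr>)"
      using conjugate_retractions_closed a by simp
    then show ?thesis
      unfolding averaged_retraction_def
      using hom_finprod[OF DD.comm_group_axioms DD.comm_group_axioms conjugation_hom_D[OF g] _
          finite_conjugate_retractions] by simp
  qed
  finally show ?thesis .
qed

end

section \<open>The normal complement\<close>

lemma (in group) kernel_mult_complement:
  assumes A: "subgroup A G" and D_subset_A: "D \<subseteq> A" and D: "divisible_subgroup D G"
    and \<sigma>: "\<sigma> \<in> hom (G\<lparr>carrier := A\<rparr>) (G\<lparr>carrier := D\<rparr>)"
    and \<sigma>_D: "\<And>d. d \<in> D \<Longrightarrow> \<sigma> d = d [^] n" and n: "1 \<le> (n::nat)"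
  shows "kernel (G\<lparr>carrier := A\<rparr>) (G\<lparr>carrier := D\<rparr>) \<sigma> <#> D = A"
proof
  let ?K = "kernel (G\<lparr>carrier := A\<rparr>) (G\<lparr>carrier := D\<rparr>) \<sigma>"
  have K: "k \<in> ?K \<longleftrightarrow> k \<in> A \<and> \<sigma> k = \<one>" for k
    by (simp add: kernel_def)
  have D_carrier: "d \<in> carrier G" if "d \<in> D" for d
    using that D_subset_A subgroup.mem_carrier[OF A] by blast
  show "?K <#> D \<subseteq> A"
  proof
    fix x
    assume "x \<in> ?K <#> D"
    then obtain k d where "k \<in> ?K" "d \<in> D" "x = k \<otimes> d"
      unfolding set_mult_def by blast
    then show "x \<in> A"
      using K D_subset_A subgroup.m_closed[OF A] by auto
  qed
  show "A \<subseteq> ?K <#> D"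
  proof
    fix a
    assume a: "a \<in> A"
    have \<sigma>_closed: "\<sigma> x \<in> D" if "x \<in> A" for x
      using hom_in_carrier[OF \<sigma>] that by simp
    obtain e where e: "e \<in> D" and e_pow: "e [^] n = \<sigma> a"
      using D \<sigma>_closed[OF a] n unfolding divisible_subgroup_def by blast
    define s where "s = a \<otimes> inv e"
    have eA: "e \<in> A"
      using e D_subset_A by blast
    have s: "s \<in> A"
      unfolding s_def by (rule subgroup.m_closed[OF A a subgroup.m_inv_closed[OF A eA]])
    have a_eq: "s \<otimes> e = a"
      unfolding s_def using subgroup.mem_carrier[OF A a] D_carrier[OF e] by (simp add: m_assoc)
    have "\<sigma> s \<otimes> \<sigma> a = \<sigma> a"
      using hom_mult[OF \<sigma>, of s e] s eA \<sigma>_D[OF e] e_pow a_eq by simp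
    then have "s \<in> ?K"
      using K s \<sigma>_closed[OF s] \<sigma>_closed[OF a] D_carrier by simp
    then show "a \<in> ?K <#> D"
      unfolding set_mult_def using a_eq e by blast
  qed
qed

lemma (in group) kernel_normal_if_conj_equivariant:
  assumes A: "A \<lhd> G" and D: "subgroup D G"
    and \<sigma>: "\<sigma> \<in> hom (G\<lparr>carrier := A\<rparr>) (G\<lparr>carrier := D\<rparr>)"
    and equivariant: "\<And>g a. g \<in> carrier G \<Longrightarrow> a \<in> A \<Longrightarrow> \<sigma> (g \<otimes> a \<otimes> inv g) = g \<otimes> \<sigma> a \<otimes> inv g"
  shows "kernel (G\<lparr>carrier := A\<rparr>) (G\<lparr>carrier := D\<rparr>) \<sigma> \<lhd> G"
proof -
  let ?K = "kernel (G\<lparr>carrier := A\<rparr>) (G\<lparr>carrier := D\<rparr>) \<sigma>"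
  have AS: "subgroup A G"
    using A normal_imp_subgroup by blast
  have "group_hom (G\<lparr>carrier := A\<rparr>) (G\<lparr>carrier := D\<rparr>) \<sigma>"
    using subgroup_imp_group[OF AS] subgroup_imp_group[OF D] \<sigma>
    by (simp add: group_hom_def group_hom_axioms_def)
  then have "subgroup ?K G"
    using incl_subgroup[OF AS] group_hom.subgroup_kernel by blast
  moreover have "g \<otimes> k \<otimes> inv g \<in> ?K" if g: "g \<in> carrier G" and k: "k \<in> ?K" for g k
  proof -
    have kA: "k \<in> A" and "\<sigma> k = \<one>"
      using k by (simp_all add: kernel_def)
    then have "\<sigma> (g \<otimes> k \<otimes> inv g) = \<one>"
      using equivariant[OF g kA] g by simp
    then show ?thesis
      using normal.inv_op_closed2[OF A g kA] by (simp add: kernel_def)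
  qed
  ultimately show ?thesis
    by (simp add: normal_inv_iff)
qed

lemma (in group) commutative_subgroup_divisible_retraction:
  assumes A: "commutative_subgroup A G" and D: "D \<subseteq> A" "divisible_subgroup D G"
  obtains \<pi> where "\<pi> \<in> hom (G\<lparr>carrier := A\<rparr>) (G\<lparr>carrier := D\<rparr>)" and "\<And>d. d \<in> D \<Longrightarrow> \<pi> d = d"
proof -
  interpret A: comm_group "G\<lparr>carrier := A\<rparr>"
    using commutative_subgroup_imp_comm_group[OF A] .
  have "subgroup D (G\<lparr>carrier := A\<rparr>)"
    using A D unfolding commutative_subgroup_def divisible_subgroup_def by (auto intro: subgroup_incl)
  then have "divisible_subgroup D (G\<lparr>carrier := A\<rparr>)"
    using D(2) unfolding divisible_subgroup_def by (simp add: nat_pow_consistent[symmetric])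
  then show ?thesis
    using A.divisible_subgroup_retraction that by auto
qed

lemma (in group) normal_complement_of_divisible_chernikov:
  assumes A: "A \<lhd> G" "commutative_subgroup A G" and index: "finite (rcosets (centralizer G A))"
    and D: "D \<subseteq> A" "D \<lhd> G" "divisible_subgroup D G" "chernikov_subgroup D G"
  shows "\<exists>S. S \<subseteq> A \<and> S \<lhd> G \<and> A = S <#> D \<and> finite (S \<inter> D)"
proof -
  have A_subgroup: "subgroup A G" and D_subgroup: "subgroup D G"
    using A(1) D(2) normal_imp_subgroup by blast+
  obtain \<pi> where \<pi>: "\<pi> \<in> hom (G\<lparr>carrier := A\<rparr>) (G\<lparr>carrier := D\<rparr>)"
    and retraction: "\<And>d. d \<in> D \<Longrightarrow> \<pi> d = d"
    using commutative_subgroup_divisible_retraction[OF A(2) D(1,3)] by blast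
  have D_commutative: "commutative_subgroup D G"
    using A(2) D(1) D_subgroup unfolding commutative_subgroup_def by blast
  have "conjugation_averaging G A D \<pi>"
    unfolding conjugation_averaging_def conjugation_averaging_axioms_def
    using group_axioms A(1) D(1,2) index \<pi> retraction D_commutative by blast
  then interpret conjugation_averaging G A D \<pi> .
  define S where "S = kernel (G\<lparr>carrier := A\<rparr>) (G\<lparr>carrier := D\<rparr>) averaged_retraction"
  define n where "n = card conjugate_retractions"
  have n: "1 \<le> n"
    unfolding n_def using finite_conjugate_retractions conjugate_retractions_nonempty
    by (simp add: Suc_le_eq card_gt_0_iff)
  have "S \<inter> D \<subseteq> {d \<in> D. d [^] n = \<one>}"
    unfolding S_def n_def kernel_def using averaged_retraction_on_D by auto
  then have "finite (S \<inter> D)"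
    using chernikov_subgroup_torsion_finite[OF D(4) D_commutative n] finite_subset by blast
  moreover have "S \<lhd> G"
    unfolding S_def using kernel_normal_if_conj_equivariant[OF A(1) D_subgroup
        averaged_retraction_hom averaged_retraction_conj] .
  moreover have "A = S <#> D"
    unfolding S_def using kernel_mult_complement[OF A_subgroup D(1) D(3)
        averaged_retraction_hom averaged_retraction_on_D n[unfolded n_def]] by simp
  moreover have "S \<subseteq> A"
    unfolding S_def kernel_def by auto
  ultimately show ?thesis
    by blast
qed

theorem lemma2p5:
  fixes G :: "('a, 'b) monoid_scheme" and p :: nat and A D :: "'a set"
  assumes "Factorial_Ring.prime p"
    and "p_group p G"
    and "A \<lhd> G" and "commutative_subgroup A G"
    and "finite (rcosets\<^bsub>G\<^esub> (centralizer G A))"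
    and "D \<subseteq> A" and "D \<lhd> G"
    and "divisible_subgroup D G" and "chernikov_subgroup D G"
  shows "\<exists>S. S \<subseteq> A \<and> S \<lhd> G \<and> A = S <#>\<^bsub>G\<^esub> D \<and> finite (S \<inter> D)"
  \<comment> \<open>of the p-group hypothesis only the group axioms are needed\<close>
  using group.normal_complement_of_divisible_chernikov[OF _ assms(3-9)] assms(2)
  unfolding p_group_def by blast

end
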